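(* Let $\pi$ be a probability measure on $\overline G$ with $\pi(\partial G)=0$ such that $\int_{\overline G}\mathcal Lf\,d\pi\le0$ for every $f$ with $-f\in\mathcal H$. Given $n\in\mathbb N$ and $f_i\in\mathcal H$, $i=1,\dots,n$, for each concave function $\psi\in\mathcal C^2(\mathbb R^n)$ that is monotone increasing in each variable separately, and any $\lambda>0$, $$\int_{\overline G}\psi(f_1(y),\dots,f_n(y))\,d\pi(y)\ \ge\ \int_{\overline G}\psi\big(f_1(y)-\lambda\mathcal Lf_1(y),\dots,f_n(y)-\lambda\mathcal Lf_n(y)\big)\,d\pi(y).$$
   Context: $G\subset\mathbb R^J$ is a nonempty connected domain; $d(\cdot)$ is a set-valued map on $\overline G$ with $d(x)$ a nonempty closed convex cone with vertex $0$ for $x\in\partial G$, $d(x)=\{0\}$ in the interior, closed graph; $\mathcal V\subset\partial G$. $b:\mathbb R^J\to\mathbb R^J$ and $\sigma:\mathbb R^J\to\mathbb R^{J\times N}$ are continuous, $a=\sigma\sigma^T$, $\mathcal Lf(x)=\sum_ib_i(x)\partial_{x_i}f(x)+\frac12\sum_{i,j}a_{ij}(x)\partial^2_{x_ix_j}f(x)$. $\mathcal C^2_c(\overline G)$: restrictions to $\overline G$ of functions $\mathcal C^2$ on every open neighbourhood of $\overline G$, with compact support; $\mathcal C^2_c(\overline G)\oplus\mathbb R$: sums of such a function and a constant. $\mathcal H=\{f\in\mathcal C^2_c(\overline G)\oplus\mathbb R: f$ is constant on some open neighbourhood of each point of $\mathcal V$, and $\langle d,\nabla f(y)\rangle\le0$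 for all $d\in d(y)$, $y\in\partial G\}$. *)

theory Defs
  imports "HOL-Analysis.Analysis" "HOL-Probability.Probability"
begin

definition partial :: "'n::finite \<Rightarrow> (real^'n \<Rightarrow> real) \<Rightarrow> real^'n \<Rightarrow> real" where
  "partial i f x = deriv (\<lambda>t. f (x + t *\<^sub>R axis i 1)) 0"

definition grad :: "(real^'n::finite \<Rightarrow> real) \<Rightarrow> real^'n \<Rightarrow> real^'n" where
  "grad f x = (\<chi> i. partial i f x)"

definition C2_on :: "(real^'n::finite) set \<Rightarrow> (real^'n \<Rightarrow> real) \<Rightarrow> bool" where
  "C2_on U f \<longleftrightarrow> f differentiable_on U \<and> (\<forall>i. partial i f differentiable_on U)
      \<and> (\<forall>i j. continuous_on U (partial i (partial j f)))"

definition gen ::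
  "(real^'j::finite \<Rightarrow> real^'j) \<Rightarrow> (real^'j \<Rightarrow> real^'m::finite^'j) \<Rightarrow> (real^'j \<Rightarrow> real) \<Rightarrow> real^'j \<Rightarrow> real" where
  "gen b \<sigma> f x = (\<Sum>i\<in>UNIV. b x $ i * partial i f x)
     + 1/2 * (\<Sum>i\<in>UNIV. \<Sum>j\<in>UNIV. ((\<sigma> x ** transpose (\<sigma> x)) $ i $ j) * partial i (partial j f) x)"

text \<open>Elements of C^2_c(closure G) (+) R, represented by a C^2 extension to an open
  neighbourhood of closure G: f = g + c on that neighbourhood, g C^2 with
  compact support in closure G.\<close>
definition C2c_plus_const :: "(real^'j::finite) set \<Rightarrow> (real^'j \<Rightarrow> real) \<Rightarrow> bool" where
  "C2c_plus_const G f \<longleftrightarrow> (\<exists>U c. open U \<and> closure G \<subseteq> U \<and> C2_on U f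
      \<and> compact (closure {x \<in> closure G. f x \<noteq> c}))"

definition Hclass ::
  "(real^'j::finite) set \<Rightarrow> (real^'j \<Rightarrow> (real^'j) set) \<Rightarrow> (real^'j) set \<Rightarrow> (real^'j \<Rightarrow> real) set" where
  "Hclass G d V = {f. C2c_plus_const G f
      \<and> (\<forall>v\<in>V. \<exists>W. open W \<and> v \<in> W \<and> (\<exists>c. \<forall>x\<in>W \<inter> closure G. f x = c))
      \<and> (\<forall>y\<in>frontier G. \<forall>e\<in>d y. e \<bullet> grad f y \<le> 0)}"

end

theory Submission
  imports Defs
begin

text \<open>Put \<open>F = (f\<^sub>1, \<dots>, f\<^sub>n)\<close> and \<open>g = \<psi> \<circ> F\<close>. Composition with \<open>\<psi>\<close> preserves the defining
  properties of \<open>\<H>\<close>; for the boundary condition this is where \<open>\<psi>\<close> being increasing enters, as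
  \<open>\<nabla>g = \<Sum>\<^sub>k \<partial>\<^sub>k\<psi>(F) \<nabla>f\<^sub>k\<close> with nonnegative weights. Hence \<open>g \<in> \<H>\<close> and \<open>\<integral> \<L>g d\<pi> \<ge> 0\<close>.
  By the second-order chain rule (Ito's formula for the generator)
  \<open>\<L>g = \<Sum>\<^sub>k \<partial>\<^sub>k\<psi>(F) \<L>f\<^sub>k + \<onehalf> \<Sum>\<^sub>m \<langle>w\<^sub>m, D\<^sup>2\<psi>(F) w\<^sub>m\<rangle>\<close>, where \<open>(w\<^sub>m)\<^sub>k = \<Sum>\<^sub>i \<sigma>\<^sub>i\<^sub>m \<partial>\<^sub>if\<^sub>k\<close>,
  and the last sum is nonpositive by concavity. With the tangent inequality for \<open>\<psi>\<close> this gives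
  \<open>\<psi>(F - \<lambda>\<L>F) \<le> \<psi>(F) - \<lambda> \<Sum>\<^sub>k \<partial>\<^sub>k\<psi>(F) \<L>f\<^sub>k \<le> g - \<lambda>\<L>g\<close> pointwise; integrate against \<open>\<pi>\<close>.\<close>

lemma vec_lambda_eq_sum_axis: "(\<chi> k. h k) = (\<Sum>k\<in>UNIV. h k *\<^sub>R axis k (1::real))"
  using basis_expansion[of "\<chi> k. h k"] by (simp add: scalar_mult_eq_scaleR)

lemma has_derivative_vec_lambda:
  fixes f :: "'k::finite \<Rightarrow> 'a::real_normed_vector \<Rightarrow> real"
  assumes "\<And>k. (f k has_derivative f' k) (at x)"
  shows "((\<lambda>y. \<chi> k. f k y) has_derivative (\<lambda>v. \<chi> k. f' k v)) (at x)"
proof -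
  have "((\<lambda>y. \<Sum>k\<in>UNIV. f k y *\<^sub>R axis k (1::real)) has_derivative
      (\<lambda>v. \<Sum>k\<in>UNIV. f' k v *\<^sub>R axis k 1)) (at x)"
    using assms by (intro has_derivative_sum has_derivative_scaleR_left)
  then show ?thesis by (subst (1 2) vec_lambda_eq_sum_axis)
qed

lemma differentiable_vec_lambda:
  fixes f :: "'k::finite \<Rightarrow> 'a::real_normed_vector \<Rightarrow> real"
  assumes "\<And>k. f k differentiable (at x)"
  shows "(\<lambda>y. \<chi> k. f k y) differentiable (at x)"
  using assms has_derivative_vec_lambda unfolding differentiable_def by metis

lemma has_field_derivative_along_line:
  fixes f :: "'a::real_normed_vector \<Rightarrow> real"
  assumes "(f has_derivative f') (at x)"
  shows "((\<lambda>t. f (x + t *\<^sub>R v)) has_field_derivative f' v) (at 0)"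
proof -
  have "((\<lambda>t::real. x + t *\<^sub>R v) has_derivative (\<lambda>t. t *\<^sub>R v)) (at 0)"
    by (auto intro!: derivative_eq_intros)
  from has_derivative_compose[OF this] assms
  have "((\<lambda>t. f (x + t *\<^sub>R v)) has_derivative (\<lambda>t. f' (t *\<^sub>R v))) (at 0)"
    by simp
  moreover have "(\<lambda>t. f' (t *\<^sub>R v)) = (*) (f' v)"
    using linear_scale[OF has_derivative_linear[OF assms]] by (auto simp: mult.commute)
  ultimately show ?thesis
    unfolding has_field_derivative_def by simp
qed

lemma partial_eq_derivative:
  assumes "(f has_derivative f') (at x)"
  shows "partial i f x = f' (axis i 1)"
  unfolding partial_def by (rule DERIV_imp_deriv[OF has_field_derivative_along_line[OF assms]])

lemma derivative_eq_sum_partial: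
  fixes f :: "real^'n::finite \<Rightarrow> real"
  assumes "(f has_derivative f') (at x)"
  shows "f' v = (\<Sum>i\<in>UNIV. v $ i * partial i f x)"
proof -
  have lin: "linear f'"
    using assms by (rule has_derivative_linear)
  have "f' v = f' (\<Sum>i\<in>UNIV. v $ i *\<^sub>R axis i 1)"
    using vec_lambda_eq_sum_axis[of "\<lambda>i. v $ i"] by simp
  also have "\<dots> = (\<Sum>i\<in>UNIV. v $ i * f' (axis i 1))"
    by (simp add: linear_sum[OF lin] linear_scale[OF lin])
  finally show ?thesis
    by (simp add: partial_eq_derivative[OF assms])
qed

lemma partial_cong_open:
  assumes "open S" "x \<in> S" "\<And>y. y \<in> S \<Longrightarrow> f y = g y"
  shows "partial i f x = partial i g x"
  unfolding partial_def
proof (rule deriv_cong_ev[OF _ refl])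
  let ?T = "(\<lambda>t::real. x + t *\<^sub>R axis i 1) -` S"
  have "open ?T"
    by (rule open_vimage[OF assms(1)]) (intro continuous_intros)
  moreover have "0 \<in> ?T"
    using assms by simp
  ultimately show "\<forall>\<^sub>F t in nhds 0. f (x + t *\<^sub>R axis i 1) = g (x + t *\<^sub>R axis i 1)"
    unfolding eventually_nhds using assms(3) by blast
qed

lemma partial_const [simp]: "partial i (\<lambda>y. c) x = 0"
  using partial_eq_derivative[of "\<lambda>y. c" "\<lambda>_. 0" x i] by simp

lemma partial_minus:
  assumes "f differentiable at x"
  shows "partial i (\<lambda>y. - f y) x = - partial i f x"
proof -
  obtain D where D: "(f has_derivative D) (at x)"
    using assms differentiable_def by blast
  then have "((\<lambda>y. - f y) has_derivative (\<lambda>v. - D v)) (at x)"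
    by (intro derivative_intros)
  then show ?thesis
    using partial_eq_derivative[OF D] partial_eq_derivative by metis
qed

lemma partial_sum:
  assumes "finite A" "\<And>k. k \<in> A \<Longrightarrow> f k differentiable at x"
  shows "partial i (\<lambda>y. \<Sum>k\<in>A. f k y) x = (\<Sum>k\<in>A. partial i (f k) x)"
proof -
  obtain D where D: "\<And>k. k \<in> A \<Longrightarrow> (f k has_derivative D k) (at x)"
    using assms(2) unfolding differentiable_def by metis
  then have "((\<lambda>y. \<Sum>k\<in>A. f k y) has_derivative (\<lambda>v. \<Sum>k\<in>A. D k v)) (at x)"
    by (intro has_derivative_sum) auto
  then have "partial i (\<lambda>y. \<Sum>k\<in>A. f k y) x = (\<Sum>k\<in>A. D k (axis i 1))"
    by (rule partial_eq_derivative)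
  also have "\<dots> = (\<Sum>k\<in>A. partial i (f k) x)"
    by (intro sum.cong refl) (simp add: partial_eq_derivative[OF D])
  finally show ?thesis .
qed

lemma partial_mult:
  assumes "f differentiable at x" "g differentiable at x"
  shows "partial i (\<lambda>y. f y * g y) x = partial i f x * g x + f x * partial i g x"
proof -
  obtain D E where D: "(f has_derivative D) (at x)" and E: "(g has_derivative E) (at x)"
    using assms differentiable_def by metis
  then have "((\<lambda>y. f y * g y) has_derivative (\<lambda>v. f x * E v + D v * g x)) (at x)"
    by (intro has_derivative_mult)
  then show ?thesis
    using partial_eq_derivative[OF D] partial_eq_derivative[OF E] partial_eq_derivative
    by (metis add.commute)
qed

lemma partial_compose:
  fixes f :: "'k::finite \<Rightarrow> real^'n::finite \<Rightarrow> real" and \<phi> :: "real^'k \<Rightarrow> real"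
  assumes "\<And>k. f k differentiable (at x)" "\<phi> differentiable (at (\<chi> k. f k x))"
  shows "partial i (\<lambda>y. \<phi> (\<chi> k. f k y)) x
           = (\<Sum>k\<in>UNIV. partial i (f k) x * partial k \<phi> (\<chi> k. f k x))"
proof -
  obtain D where D: "\<And>k. (f k has_derivative D k) (at x)"
    using assms(1) unfolding differentiable_def by metis
  obtain P where P: "(\<phi> has_derivative P) (at (\<chi> k. f k x))"
    using assms(2) differentiable_def by blast
  have "((\<lambda>y. \<phi> (\<chi> k. f k y)) has_derivative (\<lambda>v. P (\<chi> k. D k v))) (at x)"
    using has_derivative_compose[OF has_derivative_vec_lambda[OF D] P] .
  then have "partial i (\<lambda>y. \<phi> (\<chi> k. f k y)) x = P (\<chi> k. D k (axis i 1))"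
    by (rule partial_eq_derivative)
  then show ?thesis
    by (simp add: derivative_eq_sum_partial[OF P] partial_eq_derivative[OF D])
qed

lemma C2_on_subset: "C2_on U f \<Longrightarrow> W \<subseteq> U \<Longrightarrow> C2_on W f"
  unfolding C2_on_def by (meson differentiable_on_subset continuous_on_subset)

lemma C2_on_differentiable_at:
  assumes "C2_on U f" "open U" "x \<in> U"
  shows "f differentiable at x" and "partial i f differentiable at x"
  using assms differentiable_on_eq_differentiable_at unfolding C2_on_def by blast+

lemma C2_on_UNIV_differentiable:
  assumes "C2_on UNIV f"
  shows "f differentiable at x" and "partial i f differentiable at x"
  using C2_on_differentiable_at[OF assms] by auto

lemma C2_on_continuous_on:
  assumes "C2_on U f"
  shows "continuous_on U f" and "continuous_on U (partial i f)"
    and "continuous_on U (partial i (partial j f))"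
  using assms differentiable_imp_continuous_on unfolding C2_on_def by blast+

lemma partial2_compose:
  fixes f :: "'k::finite \<Rightarrow> real^'n::finite \<Rightarrow> real" and \<phi> :: "real^'k \<Rightarrow> real"
  assumes U: "open U" "x \<in> U" and f: "\<And>k. C2_on U (f k)" and \<phi>: "C2_on UNIV \<phi>"
  shows "partial i (partial j (\<lambda>y. \<phi> (\<chi> k. f k y))) x
    = (\<Sum>k\<in>UNIV. partial i (partial j (f k)) x * partial k \<phi> (\<chi> k. f k x)
        + partial j (f k) x * (\<Sum>l\<in>UNIV. partial i (f l) x * partial l (partial k \<phi>) (\<chi> k. f k x)))"
proof -
  have df: "f k differentiable at y" "partial j (f k) differentiable at y" if "y \<in> U" for k y
    using C2_on_differentiable_at[OF f U(1) that] by auto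
  have d\<phi>: "\<phi> differentiable at z" "partial k \<phi> differentiable at z" for k z
    using C2_on_UNIV_differentiable[OF \<phi>] by auto
  have d\<phi>F: "(\<lambda>y. partial k \<phi> (\<chi> k. f k y)) differentiable at x" for k
    using differentiable_chain_at[OF differentiable_vec_lambda[OF df(1)[OF U(2)]] d\<phi>(2)]
    by (simp add: o_def)
  have "partial i (partial j (\<lambda>y. \<phi> (\<chi> k. f k y))) x
      = partial i (\<lambda>y. \<Sum>k\<in>UNIV. partial j (f k) y * partial k \<phi> (\<chi> k. f k y)) x"
    using df(1) d\<phi>(1) by (intro partial_cong_open[OF U] partial_compose)
  also have "\<dots> = (\<Sum>k\<in>UNIV. partial i (partial j (f k)) x * partial k \<phi> (\<chi> k. f k x)
      + partial j (f k) x * partial i (\<lambda>y. partial k \<phi> (\<chi> k. f k y)) x)"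
    using df[OF U(2)] d\<phi>F
    by (simp add: partial_sum partial_mult differentiable_mult)
  also have "\<dots> = (\<Sum>k\<in>UNIV. partial i (partial j (f k)) x * partial k \<phi> (\<chi> k. f k x)
      + partial j (f k) x * (\<Sum>l\<in>UNIV. partial i (f l) x * partial l (partial k \<phi>) (\<chi> k. f k x)))"
    using df(1)[OF U(2)] d\<phi>(2) by (simp add: partial_compose)
  finally show ?thesis .
qed

lemma C2_on_compose:
  fixes f :: "'k::finite \<Rightarrow> real^'n::finite \<Rightarrow> real" and \<phi> :: "real^'k \<Rightarrow> real"
  assumes U: "open U" and f: "\<And>k. C2_on U (f k)" and \<phi>: "C2_on UNIV \<phi>"
  shows "C2_on U (\<lambda>y. \<phi> (\<chi> k. f k y))"
  unfolding C2_on_def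
proof (intro conjI allI)
  have df: "f k differentiable at y" "partial j (f k) differentiable at y" if "y \<in> U" for k j y
    using C2_on_differentiable_at[OF f U that] by auto
  have d\<phi>: "\<phi> differentiable at z" "partial k \<phi> differentiable at z" for k z
    using C2_on_UNIV_differentiable[OF \<phi>] by auto
  have d\<phi>F: "(\<lambda>y. \<psi> (\<chi> k. f k y)) differentiable at y"
    if "y \<in> U" "\<And>z. \<psi> differentiable at z" for \<psi> y
    using differentiable_chain_at[OF differentiable_vec_lambda[OF df(1)[OF that(1)]] that(2)]
    by (simp add: o_def)
  show "(\<lambda>y. \<phi> (\<chi> k. f k y)) differentiable_on U"
    unfolding differentiable_on_eq_differentiable_at[OF U] using d\<phi>F d\<phi>(1) by blast
  fix i j
  have first: "partial j (\<lambda>y. \<phi> (\<chi> k. f k y)) y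
      = (\<Sum>k\<in>UNIV. partial j (f k) y * partial k \<phi> (\<chi> k. f k y))" if "y \<in> U" for y
    using df(1)[OF that] d\<phi>(1) by (rule partial_compose)
  show "partial j (\<lambda>y. \<phi> (\<chi> k. f k y)) differentiable_on U"
    unfolding differentiable_on_eq_differentiable_at[OF U]
  proof
    fix y assume y: "y \<in> U"
    have "(\<lambda>y. \<Sum>k\<in>UNIV. partial j (f k) y * partial k \<phi> (\<chi> k. f k y)) differentiable at y"
      using df(2)[OF y] d\<phi>F[OF y d\<phi>(2)] by (intro differentiable_sum differentiable_mult) auto
    then obtain D where "((\<lambda>y. \<Sum>k\<in>UNIV. partial j (f k) y * partial k \<phi> (\<chi> k. f k y))
        has_derivative D) (at y)"
      unfolding differentiable_def by blast
    then have "(partial j (\<lambda>y. \<phi> (\<chi> k. f k y)) has_derivative D) (at y)"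
      by (rule has_derivative_transform_within_open[OF _ U y]) (simp add: first)
    then show "partial j (\<lambda>y. \<phi> (\<chi> k. f k y)) differentiable at y"
      unfolding differentiable_def by blast
  qed
  have cF: "continuous_on U (\<lambda>y. \<chi> k. f k y)"
    using C2_on_continuous_on(1)[OF f] by (rule continuous_on_vec_lambda)
  have "continuous_on U (\<lambda>x. \<Sum>k\<in>UNIV. partial i (partial j (f k)) x * partial k \<phi> (\<chi> k. f k x)
      + partial j (f k) x * (\<Sum>l\<in>UNIV. partial i (f l) x * partial l (partial k \<phi>) (\<chi> k. f k x)))"
    by (intro continuous_on_sum continuous_on_add continuous_on_mult C2_on_continuous_on[OF f]
        continuous_on_compose2[OF C2_on_continuous_on(2)[OF \<phi>] cF subset_UNIV]
        continuous_on_compose2[OF C2_on_continuous_on(3)[OF \<phi>] cF subset_UNIV])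
  then show "continuous_on U (partial i (partial j (\<lambda>y. \<phi> (\<chi> k. f k y))))"
    by (rule continuous_on_eq) (simp add: partial2_compose[OF U _ f \<phi>])
qed

lemma DERIV_nonneg_if_right_ge:
  assumes D: "(\<phi> has_real_derivative D) (at 0)" and ge: "\<And>t. 0 < t \<Longrightarrow> t \<le> 1 \<Longrightarrow> \<phi> 0 \<le> \<phi> t"
  shows "0 \<le> D"
proof (rule ccontr)
  assume "\<not> 0 \<le> D"
  then obtain e where e: "0 < e" "\<And>h. 0 < h \<Longrightarrow> h < e \<Longrightarrow> \<phi> (0 + h) < \<phi> 0"
    using DERIV_neg_dec_right[OF D] by force
  have "\<phi> (min (e/2) 1) < \<phi> 0"
    using e(2)[of "min (e/2) 1"] e(1) by simp
  moreover have "\<phi> 0 \<le> \<phi> (min (e/2) 1)"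
    using ge e(1) by simp
  ultimately show False by simp
qed

lemma mono_axis_imp_partial_nonneg:
  fixes \<psi> :: "real^'k::finite \<Rightarrow> real"
  assumes mono: "\<And>t. 0 \<le> t \<Longrightarrow> \<psi> z \<le> \<psi> (z + t *\<^sub>R axis k 1)"
    and d: "\<psi> differentiable at z"
  shows "0 \<le> partial k \<psi> z"
proof -
  obtain P where P: "(\<psi> has_derivative P) (at z)"
    using d differentiable_def by blast
  show ?thesis
    using DERIV_nonneg_if_right_ge[OF has_field_derivative_along_line[OF P]] mono
    by (simp add: partial_eq_derivative[OF P])
qed

lemma concave_on_le_tangent:
  fixes \<psi> :: "real^'k::finite \<Rightarrow> real"
  assumes conc: "concave_on UNIV \<psi>" and d: "\<psi> differentiable at x"
  shows "\<psi> y \<le> \<psi> x + (\<Sum>k\<in>UNIV. (y - x) $ k * partial k \<psi> x)"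
proof -
  obtain P where P: "(\<psi> has_derivative P) (at x)"
    using d differentiable_def by blast
  have D: "((\<lambda>t. \<psi> (x + t *\<^sub>R (y - x)) - t * (\<psi> y - \<psi> x)) has_real_derivative
      P (y - x) - (\<psi> y - \<psi> x)) (at 0)"
    using has_field_derivative_along_line[OF P] by (auto intro!: derivative_eq_intros)
  have "\<psi> x \<le> \<psi> (x + t *\<^sub>R (y - x)) - t * (\<psi> y - \<psi> x)" if "0 < t" "t \<le> 1" for t
  proof -
    have "x + t *\<^sub>R (y - x) = (1 - t) *\<^sub>R x + t *\<^sub>R y"
      by (simp add: algebra_simps)
    then show ?thesis
      using concave_onD[OF conc, of t x y] that by (simp add: algebra_simps)
  qed
  then have "0 \<le> P (y - x) - (\<psi> y - \<psi> x)"
    using DERIV_nonneg_if_right_ge[OF D] by simp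
  then show ?thesis
    by (simp add: derivative_eq_sum_partial[OF P])
qed

text \<open>The directional derivative of \<open>\<psi>\<close> along \<open>w\<close> is nonincreasing along \<open>w\<close>, by the
  tangent inequalities at \<open>x\<close> and at \<open>x + t w\<close>.\<close>
lemma concave_on_hessian_nonpos:
  fixes \<psi> :: "real^'k::finite \<Rightarrow> real"
  assumes conc: "concave_on UNIV \<psi>" and d: "\<And>z. \<psi> differentiable at z"
    and dd: "\<And>k. partial k \<psi> differentiable at x"
  shows "(\<Sum>k\<in>UNIV. \<Sum>l\<in>UNIV. w $ l * w $ k * partial l (partial k \<psi>) x) \<le> 0"
proof -
  define g where "g t = (\<Sum>k\<in>UNIV. w $ k * partial k \<psi> (x + t *\<^sub>R w))" for t
  obtain D where D: "\<And>k. (partial k \<psi> has_derivative D k) (at x)"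
    using dd unfolding differentiable_def by metis
  have "(g has_real_derivative (\<Sum>k\<in>UNIV. w $ k * D k w)) (at 0)"
    unfolding g_def using has_field_derivative_along_line[OF D]
    by (intro DERIV_sum DERIV_cmult) auto
  moreover have "(\<Sum>k\<in>UNIV. w $ k * D k w)
      = (\<Sum>k\<in>UNIV. \<Sum>l\<in>UNIV. w $ l * w $ k * partial l (partial k \<psi>) x)"
    by (simp add: derivative_eq_sum_partial[OF D] sum_distrib_left mult_ac)
  ultimately have g': "((\<lambda>t. g 0 - g t) has_real_derivative
      - (\<Sum>k\<in>UNIV. \<Sum>l\<in>UNIV. w $ l * w $ k * partial l (partial k \<psi>) x)) (at 0)"
    by (auto intro!: derivative_eq_intros)
  have "g t \<le> g 0" if "0 < t" for t
  proof -
    have "\<psi> (x + t *\<^sub>R w) \<le> \<psi> x + t * g 0"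
      using concave_on_le_tangent[OF conc d[of x], of "x + t *\<^sub>R w"]
      by (simp add: g_def sum_distrib_left mult_ac)
    moreover have "\<psi> x \<le> \<psi> (x + t *\<^sub>R w) - t * g t"
      using concave_on_le_tangent[OF conc d[of "x + t *\<^sub>R w"], of x]
      by (simp add: g_def sum_distrib_left sum_negf mult_ac)
    ultimately have "t * g t \<le> t * g 0"
      by linarith
    then show ?thesis
      using that by simp
  qed
  then show ?thesis
    using DERIV_nonneg_if_right_ge[OF g'] by simp
qed

lemma sum_quadratic_form_factorization:
  fixes S :: "'j::finite \<Rightarrow> 'm::finite \<Rightarrow> real" and D :: "'j \<Rightarrow> 'k::finite \<Rightarrow> real"
    and H :: "'k \<Rightarrow> 'k \<Rightarrow> real"
  shows "(\<Sum>i\<in>UNIV. \<Sum>j\<in>UNIV. (\<Sum>m\<in>UNIV. S i m * S j m) * (\<Sum>k\<in>UNIV. D j k * (\<Sum>l\<in>UNIV. D i l * H l k)))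
    = (\<Sum>m\<in>UNIV. \<Sum>k\<in>UNIV. \<Sum>l\<in>UNIV. (\<Sum>i\<in>UNIV. S i m * D i l) * (\<Sum>i\<in>UNIV. S i m * D i k) * H l k)"
proof -
  let ?T = "\<lambda>i j m k l. S i m * S j m * (D j k * (D i l * H l k))"
  have "(\<Sum>m\<in>UNIV. \<Sum>k\<in>UNIV. \<Sum>l\<in>UNIV. (\<Sum>i\<in>UNIV. S i m * D i l) * (\<Sum>i\<in>UNIV. S i m * D i k) * H l k)
      = (\<Sum>m\<in>UNIV. \<Sum>k\<in>UNIV. \<Sum>l\<in>UNIV. \<Sum>i\<in>UNIV. \<Sum>j\<in>UNIV. ?T i j m k l)"
    by (simp add: sum_distrib_left sum_distrib_right mult_ac)
  also have "\<dots> = (\<Sum>i\<in>UNIV. \<Sum>j\<in>UNIV. \<Sum>m\<in>UNIV. \<Sum>k\<in>UNIV. \<Sum>l\<in>UNIV. ?T i j m k l)"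
    by (simp only: sum.swap[where A = "UNIV::'m set" and B = "UNIV::'j set"]
        sum.swap[where A = "UNIV::'k set" and B = "UNIV::'j set"])
  also have "\<dots> = (\<Sum>i\<in>UNIV. \<Sum>j\<in>UNIV. (\<Sum>m\<in>UNIV. S i m * S j m)
      * (\<Sum>k\<in>UNIV. D j k * (\<Sum>l\<in>UNIV. D i l * H l k)))"
    by (simp only: sum_distrib_right) (simp only: sum_distrib_left)
  finally show ?thesis ..
qed

lemma gen_compose:
  fixes f :: "'k::finite \<Rightarrow> real^'j::finite \<Rightarrow> real" and \<phi> :: "real^'k \<Rightarrow> real"
    and \<sigma> :: "real^'j \<Rightarrow> real^'m::finite^'j"
  assumes U: "open U" "x \<in> U" and f: "\<And>k. C2_on U (f k)" and \<phi>: "C2_on UNIV \<phi>"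
  shows "gen b \<sigma> (\<lambda>y. \<phi> (\<chi> k. f k y)) x
    = (\<Sum>k\<in>UNIV. partial k \<phi> (\<chi> k. f k x) * gen b \<sigma> (f k) x)
      + 1/2 * (\<Sum>m\<in>UNIV. \<Sum>k\<in>UNIV. \<Sum>l\<in>UNIV.
          (\<Sum>i\<in>UNIV. \<sigma> x $ i $ m * partial i (f l) x) * (\<Sum>i\<in>UNIV. \<sigma> x $ i $ m * partial i (f k) x)
          * partial l (partial k \<phi>) (\<chi> k. f k x))"
proof -
  let ?p = "\<lambda>k. partial k \<phi> (\<chi> k. f k x)"
  let ?H = "\<lambda>l k. partial l (partial k \<phi>) (\<chi> k. f k x)"
  let ?a = "\<lambda>i j. \<Sum>m\<in>UNIV. \<sigma> x $ i $ m * \<sigma> x $ j $ m"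
  have first: "partial j (\<lambda>y. \<phi> (\<chi> k. f k y)) x = (\<Sum>k\<in>UNIV. partial j (f k) x * ?p k)" for j
    using C2_on_differentiable_at(1)[OF f U] C2_on_UNIV_differentiable(1)[OF \<phi>]
    by (intro partial_compose) auto
  have a: "(\<sigma> x ** transpose (\<sigma> x)) $ i $ j = ?a i j" for i j
    by (simp add: matrix_matrix_mult_def transpose_def)
  have drift: "(\<Sum>i\<in>UNIV. b x $ i * (\<Sum>k\<in>UNIV. partial i (f k) x * ?p k))
      = (\<Sum>k\<in>UNIV. ?p k * (\<Sum>i\<in>UNIV. b x $ i * partial i (f k) x))"
    by (simp add: sum_distrib_left mult_ac) (rule sum.swap)
  have diffusion: "(\<Sum>i\<in>UNIV. \<Sum>j\<in>UNIV. ?a i j * (\<Sum>k\<in>UNIV. partial i (partial j (f k)) x * ?p k))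
      = (\<Sum>k\<in>UNIV. ?p k * (\<Sum>i\<in>UNIV. \<Sum>j\<in>UNIV. ?a i j * partial i (partial j (f k)) x))"
    by (simp add: sum_distrib_left mult_ac sum.swap[of _ "UNIV::'k set"])
  note quadratic = sum_quadratic_form_factorization[of "\<lambda>i m. \<sigma> x $ i $ m" "\<lambda>i k. partial i (f k) x" ?H]
  have split: "(\<Sum>i\<in>UNIV. \<Sum>j\<in>UNIV. ?a i j * (\<Sum>k\<in>UNIV. partial i (partial j (f k)) x * ?p k
        + partial j (f k) x * (\<Sum>l\<in>UNIV. partial i (f l) x * ?H l k)))
      = (\<Sum>i\<in>UNIV. \<Sum>j\<in>UNIV. ?a i j * (\<Sum>k\<in>UNIV. partial i (partial j (f k)) x * ?p k))
        + (\<Sum>i\<in>UNIV. \<Sum>j\<in>UNIV. ?a i j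
          * (\<Sum>k\<in>UNIV. partial j (f k) x * (\<Sum>l\<in>UNIV. partial i (f l) x * ?H l k)))"
    by (simp only: sum.distrib distrib_left)
  have gen_f: "(\<Sum>k\<in>UNIV. ?p k * gen b \<sigma> (f k) x)
      = (\<Sum>k\<in>UNIV. ?p k * (\<Sum>i\<in>UNIV. b x $ i * partial i (f k) x))
        + 1/2 * (\<Sum>k\<in>UNIV. ?p k * (\<Sum>i\<in>UNIV. \<Sum>j\<in>UNIV. ?a i j * partial i (partial j (f k)) x))"
    unfolding gen_def a by (simp add: distrib_left sum.distrib sum_distrib_left mult_ac)
  show ?thesis
    unfolding gen_f unfolding gen_def first partial2_compose[OF U f \<phi>] a split drift diffusion quadratic
    by (simp only: distrib_left add.assoc)
qed

lemma gen_compose_le: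
  fixes f :: "'k::finite \<Rightarrow> real^'j::finite \<Rightarrow> real" and \<psi> :: "real^'k \<Rightarrow> real"
    and \<sigma> :: "real^'j \<Rightarrow> real^'m::finite^'j"
  assumes "open U" "x \<in> U" "\<And>k. C2_on U (f k)" and \<psi>: "C2_on UNIV \<psi>" "concave_on UNIV \<psi>"
  shows "gen b \<sigma> (\<lambda>y. \<psi> (\<chi> k. f k y)) x \<le> (\<Sum>k\<in>UNIV. partial k \<psi> (\<chi> k. f k x) * gen b \<sigma> (f k) x)"
proof -
  have "(\<Sum>k\<in>UNIV. \<Sum>l\<in>UNIV. w $ l * w $ k * partial l (partial k \<psi>) (\<chi> k. f k x)) \<le> 0" for w
    using C2_on_UNIV_differentiable[OF \<psi>(1)] by (intro concave_on_hessian_nonpos[OF \<psi>(2)])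
  from sum_nonpos[OF this, of "\<lambda>m. \<chi> l. \<Sum>i\<in>UNIV. \<sigma> x $ i $ m * partial i (f l) x" UNIV]
  show ?thesis
    unfolding gen_compose[OF assms(1-4)] by simp
qed

lemma concave_compose_shift_le:
  fixes f :: "'k::finite \<Rightarrow> real^'j::finite \<Rightarrow> real" and \<psi> :: "real^'k \<Rightarrow> real"
    and \<sigma> :: "real^'j \<Rightarrow> real^'m::finite^'j"
  assumes "open U" "x \<in> U" "\<And>k. C2_on U (f k)"
    and \<psi>: "C2_on UNIV \<psi>" "concave_on UNIV \<psi>" "\<And>k z. 0 \<le> partial k \<psi> z"
    and "0 \<le> lam"
  shows "\<psi> (\<chi> k. f k x - lam * gen b \<sigma> (f k) x)
           \<le> \<psi> (\<chi> k. f k x) - lam * gen b \<sigma> (\<lambda>y. \<psi> (\<chi> k. f k y)) x"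
proof -
  have "\<psi> (\<chi> k. f k x - lam * gen b \<sigma> (f k) x)
      \<le> \<psi> (\<chi> k. f k x) - lam * (\<Sum>k\<in>UNIV. partial k \<psi> (\<chi> k. f k x) * gen b \<sigma> (f k) x)"
    using concave_on_le_tangent[OF \<psi>(2) C2_on_UNIV_differentiable(1)[OF \<psi>(1)],
        of "\<chi> k. f k x - lam * gen b \<sigma> (f k) x" "\<chi> k. f k x"]
    by (simp add: sum_distrib_left sum_negf mult_ac)
  also have "\<dots> \<le> \<psi> (\<chi> k. f k x) - lam * gen b \<sigma> (\<lambda>y. \<psi> (\<chi> k. f k y)) x"
    using gen_compose_le[OF assms(1-3) \<psi>(1,2), of b \<sigma>] \<open>0 \<le> lam\<close> by (simp add: mult_left_mono)
  finally show ?thesis .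
qed

lemma gen_minus:
  assumes U: "open U" "x \<in> U" and h: "C2_on U h"
  shows "gen b \<sigma> (\<lambda>y. - h y) x = - gen b \<sigma> h x"
proof -
  have first: "partial j (\<lambda>y. - h y) y = - partial j h y" if "y \<in> U" for j y
    using C2_on_differentiable_at(1)[OF h U(1) that] by (rule partial_minus)
  have second: "partial i (partial j (\<lambda>y. - h y)) x = - partial i (partial j h) x" for i j
  proof -
    have "partial i (partial j (\<lambda>y. - h y)) x = partial i (\<lambda>y. - partial j h y) x"
      using first by (rule partial_cong_open[OF U])
    also have "\<dots> = - partial i (partial j h) x"
      using C2_on_differentiable_at(2)[OF h U] by (rule partial_minus)
    finally show ?thesis .
  qed
  show ?thesis
    unfolding gen_def by (simp add: first[OF U(2)] second sum_negf algebra_simps)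
qed

lemma continuous_on_gen:
  fixes b :: "real^'j::finite \<Rightarrow> real^'j" and \<sigma> :: "real^'j \<Rightarrow> real^'m::finite^'j"
  assumes "C2_on U h" "continuous_on UNIV b" "continuous_on UNIV \<sigma>"
  shows "continuous_on U (gen b \<sigma> h)"
proof -
  have b: "continuous_on U (\<lambda>x. b x $ i)" for i
    using continuous_on_subset[OF assms(2)] by (intro continuous_on_component) auto
  have \<sigma>: "continuous_on U (\<lambda>x. \<sigma> x $ i $ m)" for i m
    using continuous_on_subset[OF assms(3)] by (intro continuous_on_component) auto
  have a: "continuous_on U (\<lambda>x. (\<sigma> x ** transpose (\<sigma> x)) $ i $ j)" for i j
    unfolding matrix_matrix_mult_def transpose_def by (simp, intro continuous_intros \<sigma>)
  show ?thesis
    unfolding gen_def[abs_def] by (intro continuous_intros C2_on_continuous_on[OF assms(1)] a b)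
qed

text \<open>The derivatives of \<open>h\<close> vanish on the open set \<open>G - K\<close>, hence by continuity on its
  closure, which contains \<open>closure G - K\<close>.\<close>
lemma gen_eq_0_outside:
  assumes G: "open G" and U: "closure G \<subseteq> U" and h: "C2_on U h" and K: "closed K"
    and const: "\<And>y. y \<in> closure G \<Longrightarrow> y \<notin> K \<Longrightarrow> h y = c"
    and x: "x \<in> closure G" "x \<notin> K"
  shows "gen b \<sigma> h x = 0"
proof -
  let ?S = "G - K"
  have S: "open ?S"
    using G K by auto
  have first: "partial j h y = 0" if "y \<in> ?S" for j y
    using partial_cong_open[OF S that, of h "\<lambda>_. c"] const closure_subset by auto
  have second: "partial i (partial j h) y = 0" if "y \<in> ?S" for i j y
    using partial_cong_open[OF S that, of "partial j h" "\<lambda>_. 0"] first by simp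
  have "x \<in> - K \<inter> closure G"
    using x by auto
  also have "\<dots> \<subseteq> closure (- K \<inter> G)"
    using K by (intro open_Int_closure_subset) auto
  finally have xS: "x \<in> closure ?S"
    by (simp add: Diff_eq Int_commute)
  have SU: "closure ?S \<subseteq> U"
    using U closure_mono[of ?S G] by auto
  have "partial j h x = 0" "partial i (partial j h) x = 0" for i j
    using continuous_constant_on_closure[OF continuous_on_subset[OF C2_on_continuous_on(2)[OF h] SU] first xS]
      continuous_constant_on_closure[OF continuous_on_subset[OF C2_on_continuous_on(3)[OF h] SU] second xS]
    by auto
  then show ?thesis
    unfolding gen_def by simp
qed

lemma C2c_plus_constI:
  assumes "open U" "closure G \<subseteq> U" "C2_on U f" "compact K"
    and "\<And>x. x \<in> closure G \<Longrightarrow> x \<notin> K \<Longrightarrow> f x = c"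
  shows "C2c_plus_const G f"
proof -
  have "{x \<in> closure G. f x \<noteq> c} \<subseteq> K"
    using assms(5) by blast
  then have "compact (closure {x \<in> closure G. f x \<noteq> c})"
    using assms(4) by (meson bounded_subset compact_closure compact_imp_bounded)
  then show ?thesis
    unfolding C2c_plus_const_def using assms(1-3) by blast
qed

lemma C2c_plus_const_family:
  fixes f :: "'k::finite \<Rightarrow> real^'j::finite \<Rightarrow> real"
  assumes "\<And>k. C2c_plus_const G (f k)"
  obtains U K c where "open U" "closure G \<subseteq> U" "\<And>k. C2_on U (f k)" "compact K"
    and "\<And>k x. x \<in> closure G \<Longrightarrow> x \<notin> K \<Longrightarrow> f k x = c k"
proof -
  have "\<forall>k. \<exists>V. \<exists>c. open V \<and> closure G \<subseteq> V \<and> C2_on V (f k)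
      \<and> compact (closure {x \<in> closure G. f k x \<noteq> c})"
    using assms unfolding C2c_plus_const_def by blast
  then obtain V where "\<forall>k. \<exists>c. open (V k) \<and> closure G \<subseteq> V k \<and> C2_on (V k) (f k)
      \<and> compact (closure {x \<in> closure G. f k x \<noteq> c})"
    by (rule choice[THEN exE])
  then obtain c where "\<forall>k. open (V k) \<and> closure G \<subseteq> V k \<and> C2_on (V k) (f k)
      \<and> compact (closure {x \<in> closure G. f k x \<noteq> c k})"
    by (rule choice[THEN exE])
  then have V: "\<And>k. open (V k)" "\<And>k. closure G \<subseteq> V k" "\<And>k. C2_on (V k) (f k)"
    and c: "\<And>k. compact (closure {x \<in> closure G. f k x \<noteq> c k})"
    by auto
  let ?K = "\<Union>k. closure {x \<in> closure G. f k x \<noteq> c k}"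
  show ?thesis
  proof (rule that[of "\<Inter>k. V k" ?K c])
    show "open (\<Inter>k. V k)"
      using V(1) by (intro open_INT) auto
    show "C2_on (\<Inter>k. V k) (f k)" for k
      by (rule C2_on_subset[OF V(3)]) auto
    show "compact ?K"
      using c by (intro compact_UN) auto
    show "f k x = c k" if "x \<in> closure G" "x \<notin> ?K" for k x
    proof (rule ccontr)
      assume "f k x \<noteq> c k"
      then have "x \<in> closure {x \<in> closure G. f k x \<noteq> c k}"
        using that(1) closure_subset by fastforce
      then show False
        using that(2) by blast
    qed
  qed (use V(2) in auto)
qed

lemma locally_constant_compose:
  fixes f :: "'k::finite \<Rightarrow> 'a::topological_space \<Rightarrow> real"
  assumes "\<And>k. \<exists>W. open W \<and> v \<in> W \<and> (\<exists>c. \<forall>x\<in>W \<inter> S. f k x = c)"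
  shows "\<exists>W. open W \<and> v \<in> W \<and> (\<exists>c. \<forall>x\<in>W \<inter> S. \<phi> (\<chi> k. f k x) = c)"
proof -
  have "\<forall>k. \<exists>W. open W \<and> v \<in> W \<and> (\<exists>c. \<forall>x\<in>W \<inter> S. f k x = c)"
    using assms by (intro allI)
  then obtain W where W: "\<forall>k. open (W k) \<and> v \<in> W k \<and> (\<exists>c. \<forall>x\<in>W k \<inter> S. f k x = c)"
    by (rule choice[THEN exE])
  then have "\<forall>k. \<exists>c. \<forall>x\<in>W k \<inter> S. f k x = c"
    by blast
  then obtain c where c: "\<forall>k. \<forall>x\<in>W k \<inter> S. f k x = c k"
    by (rule choice[THEN exE])
  have "open (\<Inter>k. W k)" "v \<in> (\<Inter>k. W k)"
    using W by (auto intro: open_INT)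
  moreover have "\<forall>x\<in>(\<Inter>k. W k) \<inter> S. \<phi> (\<chi> k. f k x) = \<phi> (\<chi> k. c k)"
    using c by simp
  ultimately show ?thesis
    by blast
qed

lemma inner_grad_compose:
  fixes f :: "'k::finite \<Rightarrow> real^'j::finite \<Rightarrow> real" and \<psi> :: "real^'k \<Rightarrow> real"
  assumes "\<And>k. f k differentiable at y" "\<psi> differentiable at (\<chi> k. f k y)"
  shows "e \<bullet> grad (\<lambda>y. \<psi> (\<chi> k. f k y)) y
           = (\<Sum>k\<in>UNIV. partial k \<psi> (\<chi> k. f k y) * (e \<bullet> grad (f k) y))"
  using assms by (simp add: inner_vec_def grad_def partial_compose sum_distrib_left mult_ac
      sum.swap[of _ "UNIV::'j set" "UNIV::'k set"])

lemma Hclass_compose: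
  fixes f :: "'k::finite \<Rightarrow> real^'j::finite \<Rightarrow> real" and \<psi> :: "real^'k \<Rightarrow> real"
  assumes f: "\<And>k. f k \<in> Hclass G d V" and \<psi>: "C2_on UNIV \<psi>" "\<And>k z. 0 \<le> partial k \<psi> z"
  shows "(\<lambda>y. \<psi> (\<chi> k. f k y)) \<in> Hclass G d V"
  unfolding Hclass_def mem_Collect_eq
proof (intro conjI)
  obtain U K c where U: "open U" "closure G \<subseteq> U" and fU: "\<And>k. C2_on U (f k)" and K: "compact K"
    and c: "\<And>k x. x \<in> closure G \<Longrightarrow> x \<notin> K \<Longrightarrow> f k x = c k"
    using C2c_plus_const_family[of G f] f unfolding Hclass_def by blast
  show "C2c_plus_const G (\<lambda>y. \<psi> (\<chi> k. f k y))"
    by (rule C2c_plus_constI[OF U C2_on_compose[OF U(1) fU \<psi>(1)] K, where c = "\<psi> (\<chi> k. c k)"])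
      (simp add: c)
  show "\<forall>v\<in>V. \<exists>W. open W \<and> v \<in> W \<and> (\<exists>c. \<forall>x\<in>W \<inter> closure G. \<psi> (\<chi> k. f k x) = c)"
  proof
    fix v assume "v \<in> V"
    then have "\<exists>W. open W \<and> v \<in> W \<and> (\<exists>c. \<forall>x\<in>W \<inter> closure G. f k x = c)" for k
      using f[of k] unfolding Hclass_def by blast
    then show "\<exists>W. open W \<and> v \<in> W \<and> (\<exists>c. \<forall>x\<in>W \<inter> closure G. \<psi> (\<chi> k. f k x) = c)"
      by (rule locally_constant_compose)
  qed
  show "\<forall>y\<in>frontier G. \<forall>e\<in>d y. e \<bullet> grad (\<lambda>y. \<psi> (\<chi> k. f k y)) y \<le> 0"
  proof (intro ballI)
    fix y e assume y: "y \<in> frontier G" and e: "e \<in> d y"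
    have "y \<in> U"
      using y U(2) frontier_def by auto
    then have "e \<bullet> grad (\<lambda>y. \<psi> (\<chi> k. f k y)) y
        = (\<Sum>k\<in>UNIV. partial k \<psi> (\<chi> k. f k y) * (e \<bullet> grad (f k) y))"
      using C2_on_differentiable_at(1)[OF fU U(1)] C2_on_UNIV_differentiable(1)[OF \<psi>(1)]
      by (intro inner_grad_compose)
    also have "\<dots> \<le> 0"
      using f y e \<psi>(2) by (intro sum_nonpos mult_nonneg_nonpos) (auto simp: Hclass_def)
    finally show "e \<bullet> grad (\<lambda>y. \<psi> (\<chi> k. f k y)) y \<le> 0" .
  qed
qed

lemma integrable_continuous_const_outside_compact:
  fixes h :: "'a::metric_space \<Rightarrow> real"
  assumes M: "finite_measure M" "sets M = sets (restrict_space borel C)" "space M = C"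
    and C: "closed C" and h: "continuous_on C h"
    and K: "compact K" and const: "\<And>x. x \<in> C \<Longrightarrow> x \<notin> K \<Longrightarrow> h x = c"
  shows "integrable M h"
proof -
  have "compact (h ` (K \<inter> C))"
    using K C continuous_on_subset[OF h] by (intro compact_continuous_image) auto
  then obtain B where "\<forall>y\<in>h ` (K \<inter> C). norm y \<le> B"
    using compact_imp_bounded bounded_iff by blast
  then have B: "\<And>x. x \<in> K \<inter> C \<Longrightarrow> norm (h x) \<le> B"
    by blast
  have "norm (h x) \<le> max B (norm c)" if "x \<in> space M" for x
    using that M(3) const B[of x] by (cases "x \<in> K") auto
  moreover have "h \<in> borel_measurable M"
    using borel_measurable_continuous_on_restrict[OF h] measurable_cong_sets[OF M(2) refl] by blast
  ultimately show ?thesis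
    by (intro finite_measure.integrable_const_bound[OF M(1)] AE_I2)
qed

lemma integral_gen_nonneg:
  assumes inv: "\<And>f. (\<lambda>x. - f x) \<in> Hclass G d V \<Longrightarrow> (\<integral>x. gen b \<sigma> f x \<partial>M) \<le> 0"
    and g: "g \<in> Hclass G d V" and U: "open U" "closure G \<subseteq> U" and gU: "C2_on U g"
    and M: "space M = closure G"
  shows "0 \<le> (\<integral>x. gen b \<sigma> g x \<partial>M)"
proof -
  have "(\<integral>x. gen b \<sigma> (\<lambda>y. - g y) x \<partial>M) \<le> 0"
    using g by (intro inv) simp
  moreover have "(\<integral>x. gen b \<sigma> (\<lambda>y. - g y) x \<partial>M) = (\<integral>x. - gen b \<sigma> g x \<partial>M)"
    using gen_minus[OF U(1) _ gU] U(2) M by (intro Bochner_Integration.integral_cong) auto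
  ultimately show ?thesis
    by simp
qed

lemma integrable_compose_C2c_plus_const:
  fixes f :: "'k::finite \<Rightarrow> real^'j::finite \<Rightarrow> real" and \<psi> :: "real^'k \<Rightarrow> real"
    and b :: "real^'j \<Rightarrow> real^'j" and \<sigma> :: "real^'j \<Rightarrow> real^'m::finite^'j"
  assumes M: "finite_measure M" "sets M = sets (restrict_space borel (closure G))"
      "space M = closure G"
    and G: "open G" and U: "open U" "closure G \<subseteq> U" and f: "\<And>k. C2_on U (f k)"
    and K: "compact K" "\<And>k x. x \<in> closure G \<Longrightarrow> x \<notin> K \<Longrightarrow> f k x = c k"
    and \<psi>: "C2_on UNIV \<psi>" and b: "continuous_on UNIV b" and \<sigma>: "continuous_on UNIV \<sigma>"
  shows "integrable M (\<lambda>y. \<psi> (\<chi> k. f k y))"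
    and "integrable M (gen b \<sigma> (\<lambda>y. \<psi> (\<chi> k. f k y)))"
    and "integrable M (\<lambda>y. \<psi> (\<chi> k. f k y - lam * gen b \<sigma> (f k) y))"
proof -
  note integrable = integrable_continuous_const_outside_compact[OF M closed_closure
      continuous_on_subset[OF _ U(2)] K(1)]
  have gU: "C2_on U (\<lambda>y. \<psi> (\<chi> k. f k y))"
    by (rule C2_on_compose[OF U(1) f \<psi>])
  have gen_0: "gen b \<sigma> h x = 0"
    if "C2_on U h" "\<And>y. y \<in> closure G \<Longrightarrow> y \<notin> K \<Longrightarrow> h y = c'" "x \<in> closure G" "x \<notin> K"
    for h c' x
    using gen_eq_0_outside[OF G U(2) that(1) compact_imp_closed[OF K(1)]] that(2-4) by blast
  show "integrable M (\<lambda>y. \<psi> (\<chi> k. f k y))"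
    by (rule integrable[OF C2_on_continuous_on(1)[OF gU]]) (simp add: K(2))
  show "integrable M (gen b \<sigma> (\<lambda>y. \<psi> (\<chi> k. f k y)))"
    by (rule integrable[OF continuous_on_gen[OF gU b \<sigma>]]) (rule gen_0[OF gU], simp_all add: K(2))
  have "continuous_on U (\<lambda>y. \<chi> k. f k y - lam * gen b \<sigma> (f k) y)"
    by (intro continuous_on_vec_lambda continuous_on_diff continuous_on_mult continuous_on_const
        C2_on_continuous_on(1)[OF f] continuous_on_gen[OF f b \<sigma>])
  then have "continuous_on U (\<lambda>y. \<psi> (\<chi> k. f k y - lam * gen b \<sigma> (f k) y))"
    by (rule continuous_on_compose2[OF C2_on_continuous_on(1)[OF \<psi>] _ subset_UNIV])
  then show "integrable M (\<lambda>y. \<psi> (\<chi> k. f k y - lam * gen b \<sigma> (f k) y))"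
    by (rule integrable) (simp add: K(2) gen_0[OF f K(2)])
qed

theorem lemma5p1:
  fixes G :: "(real^'j) set"
    and d :: "real^'j \<Rightarrow> (real^'j) set"
    and V :: "(real^'j) set"
    and b :: "real^'j \<Rightarrow> real^'j"
    and \<sigma> :: "real^'j \<Rightarrow> real^'m^'j"
    and \<pi> :: "(real^'j) measure"
    and fs :: "'k::finite \<Rightarrow> real^'j \<Rightarrow> real"
    and \<psi> :: "real^'k \<Rightarrow> real"
    and lam :: real
  assumes G_open: "open G" and G_conn: "connected G" and G_ne: "G \<noteq> {}"
    and d_cone: "\<forall>x\<in>frontier G. d x \<noteq> {} \<and> closed (d x) \<and> convex (d x) \<and> cone (d x)"
    and d_int: "\<forall>x\<in>G. d x = {0}"
    and d_graph: "closed {(x, v). x \<in> closure G \<and> v \<in> d x}"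
    and V_sub: "V \<subseteq> frontier G"
    and b_cont: "continuous_on UNIV b" and \<sigma>_cont: "continuous_on UNIV \<sigma>"
    and \<pi>_prob: "prob_space \<pi>"
    and \<pi>_sets: "sets \<pi> = sets (restrict_space borel (closure G))"
    and \<pi>_space: "space \<pi> = closure G"
    and \<pi>_bd: "measure \<pi> (frontier G) = 0"
    and \<pi>_inv: "\<And>f. (\<lambda>x. - f x) \<in> Hclass G d V \<Longrightarrow> (\<integral>x. gen b \<sigma> f x \<partial>\<pi>) \<le> 0"
    and fs_H: "\<And>i. fs i \<in> Hclass G d V"
    and \<psi>_C2: "C2_on UNIV \<psi>"
    and \<psi>_concave: "concave_on UNIV \<psi>"
    and \<psi>_mono: "\<And>x i t. t \<ge> 0 \<Longrightarrow> \<psi> x \<le> \<psi> (x + t *\<^sub>R axis i 1)"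
    and lam_pos: "lam > 0"
  shows "(\<integral>y. \<psi> (\<chi> i. fs i y) \<partial>\<pi>)
           \<ge> (\<integral>y. \<psi> (\<chi> i. fs i y - lam * gen b \<sigma> (fs i) y) \<partial>\<pi>)"
proof -
  \<comment> \<open>Of the hypotheses on \<open>G\<close>, \<open>d\<close>, \<open>V\<close> and \<open>\<pi>\<close> only openness of \<open>G\<close>,
    the description of \<open>\<pi>\<close> and its invariance are used.\<close>
  let ?g = "\<lambda>y. \<psi> (\<chi> k. fs k y)"
  have \<psi>_partial: "0 \<le> partial k \<psi> z" for k z
    using \<psi>_mono C2_on_UNIV_differentiable(1)[OF \<psi>_C2] by (intro mono_axis_imp_partial_nonneg)
  obtain U K c where U: "open U" "closure G \<subseteq> U" and fU: "\<And>k. C2_on U (fs k)"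
    and K: "compact K" "\<And>k x. x \<in> closure G \<Longrightarrow> x \<notin> K \<Longrightarrow> fs k x = c k"
    using C2c_plus_const_family[of G fs] fs_H unfolding Hclass_def by blast
  have gen_g: "0 \<le> (\<integral>y. gen b \<sigma> ?g y \<partial>\<pi>)"
    using \<pi>_inv Hclass_compose[OF fs_H \<psi>_C2 \<psi>_partial] U C2_on_compose[OF U(1) fU \<psi>_C2] \<pi>_space
    by (rule integral_gen_nonneg)
  note int = integrable_compose_C2c_plus_const[OF prob_space.finite_measure[OF \<pi>_prob]
      \<pi>_sets \<pi>_space G_open U fU K \<psi>_C2 b_cont \<sigma>_cont]
  have "(\<integral>y. \<psi> (\<chi> i. fs i y - lam * gen b \<sigma> (fs i) y) \<partial>\<pi>)
      \<le> (\<integral>y. ?g y - lam * gen b \<sigma> ?g y \<partial>\<pi>)"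
  proof (rule integral_mono[OF int(3)])
    show "integrable \<pi> (\<lambda>y. ?g y - lam * gen b \<sigma> ?g y)"
      using int(1,2) by simp
    show "\<psi> (\<chi> i. fs i y - lam * gen b \<sigma> (fs i) y) \<le> ?g y - lam * gen b \<sigma> ?g y"
      if "y \<in> space \<pi>" for y
      using that U(2) \<pi>_space lam_pos
      by (intro concave_compose_shift_le[where f = fs, OF U(1) _ fU \<psi>_C2 \<psi>_concave \<psi>_partial]) auto
  qed
  also have "\<dots> = (\<integral>y. ?g y \<partial>\<pi>) - lam * (\<integral>y. gen b \<sigma> ?g y \<partial>\<pi>)"
    using int(1,2) by simp
  also have "\<dots> \<le> (\<integral>y. ?g y \<partial>\<pi>)"
    using gen_g lam_pos by simp
  finally show ?thesis .
qed

end
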